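(* Let $M=\mathbb{Z}^n$, let $N$ be its dual lattice, and let $\Delta\subset\mathbb{R}\otimes M$ be a reflexive simplicial lattice polytope containing $0$ in its interior, with dual polytope $\Delta^*\subset\mathbb{R}\otimes N$. Assume that for every $(n-1)$-dimensional face of $\partial\Delta^*$, its vertices form a $\mathbb{Z}$-basis of $N$. Let $V(\Delta^* )$ be the set of vertices of $\Delta^*$ and fix coordinates $x$ with $\mathbb{C}[N]=\mathbb{C}[x,x^{-1}]$. Then for every $\mathbf{a}=(a_v)\in(\mathbb{C}^* )^{V(\Delta^* )}$, the Laurent polynomial \[ f_{\mathbf a}(x)=\sum_{v\in V(\Delta^* )}a_vx^v\in\mathbb{C}[x,x^{-1}] \] is convenient and non-degenerate with respect to its Newton polyhedron in the sense of Kouchnirenko.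
   Context: A lattice polytope $\Delta$ with $0$ in its interior is reflexive if its dual $\Delta^*=\{u:\langle u,m\rangle\ge -1\ \forall m\in\Delta\}$ is again a lattice polytope. The Newton polyhedron $\Delta(g)$ of a Laurent polynomial $g=\sum c_mx^m$ is the convex hull of the exponents $m$ with $c_m\neq0$. $g$ is convenient if $0$ lies in the interior of $\Delta(g)$; it is non-degenerate (Kouchnirenko) if for every face $\sigma$ of $\Delta(g)$ not containing $0$, the polynomial $g_\sigma=\sum_{m\in\sigma}c_mx^m$ has no critical point on $(\mathbb{C}^* )^n$. *)

theory Defs
  imports "HOL-Analysis.Analysis"
begin

text \<open>Lattice M = Z^n inside R (x) M = real^'n; the dual lattice N is identified with
  Z^n inside real^'n via the standard inner product.\<close>

definition lattice_point :: "real^'n \<Rightarrow> bool" where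
  "lattice_point m \<longleftrightarrow> (\<forall>i. m $ i \<in> \<int>)"

definition lattice_polytope :: "(real^'n) set \<Rightarrow> bool" where
  "lattice_polytope P \<longleftrightarrow>
     (\<exists>S. finite S \<and> S \<noteq> {} \<and> (\<forall>m\<in>S. lattice_point m) \<and> P = convex hull S)"

definition polar_dual :: "(real^'n) set \<Rightarrow> (real^'n) set" where
  "polar_dual P = {u. \<forall>m\<in>P. inner u m \<ge> -1}"

definition reflexive_polytope :: "(real^'n) set \<Rightarrow> bool" where
  "reflexive_polytope P \<longleftrightarrow>
     lattice_polytope P \<and> 0 \<in> interior P \<and> lattice_polytope (polar_dual P)"

definition simplicial_polytope :: "(real^'n) set \<Rightarrow> bool" where
  "simplicial_polytope P \<longleftrightarrow>
     (\<forall>F. F facet_of P \<longrightarrow> (int CARD('n) - 1) simplex F)"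

definition polytope_vertices :: "(real^'n) set \<Rightarrow> (real^'n) set" where
  "polytope_vertices P = {v. v extreme_point_of P}"

definition lattice_basis :: "(real^'n) set \<Rightarrow> bool" where
  "lattice_basis B \<longleftrightarrow> finite B \<and> (\<forall>b\<in>B. lattice_point b) \<and> independent B \<and>
     (\<forall>m. lattice_point m \<longrightarrow>
        (\<exists>c. (\<forall>b\<in>B. c b \<in> \<int>) \<and> m = (\<Sum>b\<in>B. c b *\<^sub>R b)))"

text \<open>Laurent polynomials in x = (x_1..x_n) over C, given by a coefficient function on
  exponents m in Z^n (viewed in real^'n); x^m = prod_i x_i^(m_i).\<close>

definition monomial :: "complex^'n \<Rightarrow> real^'n \<Rightarrow> complex" where
  "monomial x m = (\<Prod>i\<in>UNIV. (x $ i) powi \<lfloor>m $ i\<rfloor>)"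

definition support :: "(real^'n \<Rightarrow> complex) \<Rightarrow> (real^'n) set" where
  "support c = {m. c m \<noteq> 0}"

definition laurent_eval :: "(real^'n \<Rightarrow> complex) \<Rightarrow> complex^'n \<Rightarrow> complex" where
  "laurent_eval c x = (\<Sum>m\<in>support c. c m * monomial x m)"

definition newton_polyhedron :: "(real^'n \<Rightarrow> complex) \<Rightarrow> (real^'n) set" where
  "newton_polyhedron c = convex hull (support c)"

definition convenient :: "(real^'n \<Rightarrow> complex) \<Rightarrow> bool" where
  "convenient c \<longleftrightarrow> 0 \<in> interior (newton_polyhedron c)"

definition restrict_coeffs :: "(real^'n \<Rightarrow> complex) \<Rightarrow> (real^'n) set \<Rightarrow> (real^'n \<Rightarrow> complex)" where
  "restrict_coeffs c \<sigma> = (\<lambda>m. if m \<in> \<sigma> then c m else 0)"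

definition torus_critical_point :: "(complex^'n \<Rightarrow> complex) \<Rightarrow> complex^'n \<Rightarrow> bool" where
  "torus_critical_point g x \<longleftrightarrow> (\<forall>i. x $ i \<noteq> 0) \<and>
     (\<forall>i. ((\<lambda>t. g (\<chi> j. if j = i then t else x $ j)) has_field_derivative 0) (at (x $ i)))"

definition kouchnirenko_nondegenerate :: "(real^'n \<Rightarrow> complex) \<Rightarrow> bool" where
  "kouchnirenko_nondegenerate c \<longleftrightarrow>
     (\<forall>\<sigma>. \<sigma> face_of newton_polyhedron c \<and> \<sigma> \<noteq> {} \<and> 0 \<notin> \<sigma> \<longrightarrow>
        \<not> (\<exists>x. torus_critical_point (laurent_eval (restrict_coeffs c \<sigma>)) x))"

end

theory Submission imports Defs begin

text \<open>The Newton polyhedron of \<open>f\<^sub>a\<close> is \<open>\<Delta>\<^sup>*\<close> itself, and \<open>0\<close> is interior to it because \<open>\<Delta>\<close> is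
  bounded. A face \<open>\<sigma>\<close> avoiding \<open>0\<close> is proper, hence lies in a facet, whose vertices are linearly
  independent; so the exponents of \<open>g\<^sub>\<sigma>\<close> are independent. At a critical point \<open>x\<close> on the torus,
  Euler's identity \<open>x\<^sub>i \<partial>\<^sub>i g = \<Sum>\<^sub>m c\<^sub>m m\<^sub>i x\<^sup>m\<close> says that the exponents weighted by \<open>c\<^sub>m x\<^sup>m\<close> sum
  to zero, so every \<open>c\<^sub>m x\<^sup>m\<close> vanishes, which is impossible on the torus.\<close>

lemma monomial_nonzero:
  assumes "\<forall>j. x $ j \<noteq> 0"
  shows "monomial x m \<noteq> 0"
  using assms unfolding monomial_def by simp

lemma monomial_partial_deriv:
  fixes x :: "complex^'n" and m :: "real^'n"
  assumes "\<forall>j. x $ j \<noteq> 0"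
  shows "((\<lambda>t. monomial (\<chi> j. if j = i then t else x $ j) m) has_field_derivative
          (of_int \<lfloor>m $ i\<rfloor> * monomial x m / x $ i)) (at (x $ i))"
proof -
  define P where "P = (\<Prod>j\<in>UNIV-{i}. (x $ j) powi \<lfloor>m $ j\<rfloor>)"
  define k where "k = \<lfloor>m $ i\<rfloor>"
  have slice: "monomial (\<chi> j. if j = i then t else x $ j) m = P * t powi k" for t
  proof -
    have "monomial (\<chi> j. if j = i then t else x $ j) m
       = t powi k * (\<Prod>j\<in>UNIV-{i}. ((\<chi> j. if j = i then t else x $ j) $ j) powi \<lfloor>m $ j\<rfloor>)"
      unfolding monomial_def k_def
      using prod.remove[of UNIV i "\<lambda>j. ((\<chi> j. if j = i then t else x $ j) $ j) powi \<lfloor>m $ j\<rfloor>"]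
      by simp
    also have "(\<Prod>j\<in>UNIV-{i}. ((\<chi> j. if j = i then t else x $ j) $ j) powi \<lfloor>m $ j\<rfloor>) = P"
      unfolding P_def by (intro prod.cong) auto
    finally show ?thesis by simp
  qed
  have at_x: "monomial x m = P * (x $ i) powi k"
    unfolding monomial_def P_def k_def by (simp add: prod.remove mult.commute)
  have "((\<lambda>t. P * t powi k) has_field_derivative P * (of_int k * (x $ i) powi (k - 1) * 1))
          (at (x $ i))"
    by (intro DERIV_cmult DERIV_power_int DERIV_ident) (use assms in auto)
  moreover have "P * (of_int k * (x $ i) powi (k - 1) * 1) = of_int k * monomial x m / x $ i"
    using assms by (simp add: at_x power_int_diff)
  ultimately show ?thesis by (simp add: slice k_def)
qed

lemma torus_critical_point_imp_exponent_sum_eq_0: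
  fixes c :: "real^'n \<Rightarrow> complex"
  assumes "torus_critical_point (laurent_eval c) x"
    and "\<forall>m\<in>support c. lattice_point m"
  shows "(\<Sum>m\<in>support c. c m * monomial x m * of_real (m $ i)) = 0"
proof -
  have nz: "\<forall>j. x $ j \<noteq> 0"
    using assms(1) unfolding torus_critical_point_def by auto
  have "((\<lambda>t. laurent_eval c (\<chi> j. if j = i then t else x $ j)) has_field_derivative
          (\<Sum>m\<in>support c. c m * (of_int \<lfloor>m $ i\<rfloor> * monomial x m / x $ i))) (at (x $ i))"
    unfolding laurent_eval_def by (intro DERIV_sum DERIV_cmult monomial_partial_deriv nz)
  moreover have "((\<lambda>t. laurent_eval c (\<chi> j. if j = i then t else x $ j)) has_field_derivative 0)
                   (at (x $ i))"
    using assms(1) unfolding torus_critical_point_def by auto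
  ultimately have "(\<Sum>m\<in>support c. c m * (of_int \<lfloor>m $ i\<rfloor> * monomial x m / x $ i)) = 0"
    by (rule DERIV_unique)
  then have "(\<Sum>m\<in>support c. c m * monomial x m * of_int \<lfloor>m $ i\<rfloor>) / x $ i = 0"
    unfolding sum_divide_distrib by (simp add: algebra_simps)
  then have "(\<Sum>m\<in>support c. c m * monomial x m * of_int \<lfloor>m $ i\<rfloor>) = 0"
    using nz by simp
  moreover have "of_int \<lfloor>m $ i\<rfloor> = (of_real (m $ i) :: complex)" if "m \<in> support c" for m
  proof -
    have "m $ i \<in> \<int>" using assms(2) that unfolding lattice_point_def by auto
    then show ?thesis by (metis Ints_cases floor_of_int of_real_of_int_eq)
  qed
  ultimately show ?thesis by (metis (no_types, lifting) sum.cong)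
qed

text \<open>Independence over \<open>\<real>\<close> suffices for complex weights: apply it to real and imaginary parts.\<close>

lemma independent_complex_combination_eq_0:
  fixes B :: "(real^'n) set" and w :: "real^'n \<Rightarrow> complex"
  assumes "finite B" "independent B"
    and "\<And>i. (\<Sum>b\<in>B. w b * of_real (b $ i)) = 0"
    and "b \<in> B"
  shows "w b = 0"
proof -
  have "(\<Sum>b\<in>B. Re (w b) *\<^sub>R b) = 0"
  proof (rule vec_eq_iff[THEN iffD2], rule allI)
    fix i
    have "Re (\<Sum>b\<in>B. w b * of_real (b $ i)) = 0" by (simp add: assms(3))
    then show "(\<Sum>b\<in>B. Re (w b) *\<^sub>R b) $ i = 0 $ i" by (simp add: Re_sum mult.commute)
  qed
  moreover have "(\<Sum>b\<in>B. Im (w b) *\<^sub>R b) = 0"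
  proof (rule vec_eq_iff[THEN iffD2], rule allI)
    fix i
    have "Im (\<Sum>b\<in>B. w b * of_real (b $ i)) = 0" by (simp add: assms(3))
    then show "(\<Sum>b\<in>B. Im (w b) *\<^sub>R b) $ i = 0 $ i" by (simp add: Im_sum mult.commute)
  qed
  ultimately have "Re (w b) = 0" "Im (w b) = 0"
    using assms(2,4) unfolding independent_explicit by auto
  then show ?thesis by (simp add: complex_eq_iff)
qed

lemma no_torus_critical_point_if_independent_support:
  fixes c :: "real^'n \<Rightarrow> complex"
  assumes "finite (support c)" "independent (support c)" "support c \<noteq> {}"
    and "\<forall>m\<in>support c. lattice_point m"
  shows "\<not> torus_critical_point (laurent_eval c) x"
proof
  assume crit: "torus_critical_point (laurent_eval c) x"
  obtain m where m: "m \<in> support c" using assms(3) by auto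
  have "c m * monomial x m = 0"
    using independent_complex_combination_eq_0[OF assms(1,2) _ m, of "\<lambda>m. c m * monomial x m"]
      torus_critical_point_imp_exponent_sum_eq_0[OF crit assms(4)]
    by blast
  moreover have "monomial x m \<noteq> 0"
    using crit monomial_nonzero unfolding torus_critical_point_def by blast
  ultimately show False using m unfolding support_def by simp
qed

lemma zero_in_interior_polar_dual:
  fixes S :: "(real^'n) set"
  assumes "bounded S"
  shows "0 \<in> interior (polar_dual S)"
proof -
  obtain R where R: "R > 0" "\<forall>m\<in>S. norm m \<le> R" using assms bounded_pos by blast
  have "ball 0 (1/R) \<subseteq> polar_dual S"
  proof
    fix u :: "real^'n" assume "u \<in> ball 0 (1/R)"
    then have u: "norm u < 1/R" by simp
    show "u \<in> polar_dual S" unfolding polar_dual_def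
    proof (clarify)
      fix m assume m: "m \<in> S"
      have "\<bar>inner u m\<bar> \<le> norm u * norm m" by (rule Cauchy_Schwarz_ineq2)
      also have "\<dots> \<le> (1/R) * R" using u R m by (intro mult_mono) auto
      also have "\<dots> = 1" using R by simp
      finally show "inner u m \<ge> -1" by simp
    qed
  qed
  moreover have "0 \<in> ball 0 (1/R)" using R by simp
  ultimately show ?thesis by (meson interior_maximal open_ball subsetD)
qed

lemma lattice_polytope_vertices:
  assumes "lattice_polytope P"
  shows "finite (polytope_vertices P)" "\<forall>v\<in>polytope_vertices P. lattice_point v"
    and "P = convex hull (polytope_vertices P)"
proof -
  obtain S where S: "finite S" "\<forall>m\<in>S. lattice_point m" "P = convex hull S"
    using assms unfolding lattice_polytope_def by blast
  have "polytope_vertices P \<subseteq> S"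
    unfolding polytope_vertices_def using S(3) by (auto intro: extreme_point_of_convex_hull)
  then show "finite (polytope_vertices P)" "\<forall>v\<in>polytope_vertices P. lattice_point v"
    using S finite_subset by blast+
  have "compact P" "convex P" using S by (auto simp: finite_imp_compact_convex_hull)
  then show "P = convex hull (polytope_vertices P)"
    unfolding polytope_vertices_def by (rule Krein_Milman_Minkowski)
qed

lemma face_of_polytope_has_vertex:
  assumes "polytope P" "\<sigma> face_of P" "\<sigma> \<noteq> {}"
  shows "polytope_vertices P \<inter> \<sigma> \<noteq> {}"
proof -
  have "compact \<sigma>" "convex \<sigma>"
    using assms(1,2) face_of_imp_compact face_of_imp_convex polytope_imp_compact polytope_imp_convex
    by blast+
  then obtain v where "v extreme_point_of \<sigma>" using extreme_point_exists_convex assms(3) by blast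
  then have "v extreme_point_of P" "v \<in> \<sigma>" using extreme_point_of_face assms(2) by blast+
  then show ?thesis unfolding polytope_vertices_def by blast
qed

lemma proper_face_vertices_subset_facet:
  assumes "polytope P" "\<sigma> face_of P" "\<sigma> \<noteq> {}" "\<sigma> \<noteq> P"
  obtains F where "F facet_of P" "polytope_vertices P \<inter> \<sigma> \<subseteq> polytope_vertices F"
proof -
  obtain F where F: "F facet_of P" "\<sigma> \<subseteq> F"
    using face_of_polyhedron_subset_facet[OF polytope_imp_polyhedron[OF assms(1)] assms(2-4)]
    by blast
  have "polytope_vertices P \<inter> \<sigma> \<subseteq> polytope_vertices F"
    using F extreme_point_of_face facet_of_imp_face_of unfolding polytope_vertices_def by blast
  with F(1) show ?thesis by (rule that)
qed

lemma newton_polyhedron_eq_lattice_polytope: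
  assumes "lattice_polytope P" "support c = polytope_vertices P"
  shows "newton_polyhedron c = P"
  unfolding newton_polyhedron_def assms(2) using lattice_polytope_vertices(3)[OF assms(1)] by simp

lemma kouchnirenko_nondegenerate_if_facet_vertices_independent:
  assumes P: "lattice_polytope P" "0 \<in> interior P"
    and indep: "\<And>F. F facet_of P \<Longrightarrow> independent (polytope_vertices F)"
    and supp: "support c = polytope_vertices P"
  shows "kouchnirenko_nondegenerate c"
  unfolding kouchnirenko_nondegenerate_def newton_polyhedron_eq_lattice_polytope[OF P(1) supp]
proof (intro allI impI)
  fix \<sigma> assume \<sigma>: "\<sigma> face_of P \<and> \<sigma> \<noteq> {} \<and> 0 \<notin> \<sigma>"
  have "polytope P"
    using P(1) unfolding lattice_polytope_def polytope_def by blast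
  have "\<sigma> \<noteq> P" using \<sigma> P(2) interior_subset by blast
  then obtain F where F: "F facet_of P" "polytope_vertices P \<inter> \<sigma> \<subseteq> polytope_vertices F"
    using proper_face_vertices_subset_facet \<open>polytope P\<close> \<sigma> by blast
  have supp\<sigma>: "support (restrict_coeffs c \<sigma>) = polytope_vertices P \<inter> \<sigma>"
    using supp unfolding support_def restrict_coeffs_def by auto
  have "independent (support (restrict_coeffs c \<sigma>))"
    using indep[OF F(1)] F(2) supp\<sigma> independent_mono by metis
  moreover have "finite (support (restrict_coeffs c \<sigma>))"
    "\<forall>m\<in>support (restrict_coeffs c \<sigma>). lattice_point m"
    using lattice_polytope_vertices(1,2)[OF P(1)] supp\<sigma> by auto
  moreover have "support (restrict_coeffs c \<sigma>) \<noteq> {}"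
    using face_of_polytope_has_vertex \<open>polytope P\<close> \<sigma> supp\<sigma> by metis
  ultimately show "\<not> (\<exists>x. torus_critical_point (laurent_eval (restrict_coeffs c \<sigma>)) x)"
    using no_torus_critical_point_if_independent_support by blast
qed

theorem lemma3p3:
  fixes \<Delta> :: "(real^'n) set" and a :: "real^'n \<Rightarrow> complex"
  assumes "reflexive_polytope \<Delta>"
    and "simplicial_polytope \<Delta>"
    and "\<forall>F. F facet_of polar_dual \<Delta> \<longrightarrow> lattice_basis (polytope_vertices F)"
    and "\<forall>v\<in>polytope_vertices (polar_dual \<Delta>). a v \<noteq> 0"
  shows "convenient (\<lambda>m. if m \<in> polytope_vertices (polar_dual \<Delta>) then a m else 0) \<and>
         kouchnirenko_nondegenerate (\<lambda>m. if m \<in> polytope_vertices (polar_dual \<Delta>) then a m else 0)"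
proof -
  define P where "P = polar_dual \<Delta>"
  define c where "c = (\<lambda>m. if m \<in> polytope_vertices P then a m else 0)"
  have lat: "lattice_polytope \<Delta>" "lattice_polytope P"
    using assms(1) unfolding reflexive_polytope_def P_def by auto
  have supp: "support c = polytope_vertices P"
    using assms(4) unfolding support_def c_def P_def by auto
  have "bounded \<Delta>"
    using lat(1) finite_imp_bounded_convex_hull unfolding lattice_polytope_def by blast
  then have "0 \<in> interior P"
    unfolding P_def by (rule zero_in_interior_polar_dual)
  then have "convenient c"
    unfolding convenient_def newton_polyhedron_eq_lattice_polytope[OF lat(2) supp] .
  moreover have "kouchnirenko_nondegenerate c"
    using lat(2) \<open>0 \<in> interior P\<close> supp assms(3)
    by (intro kouchnirenko_nondegenerate_if_facet_vertices_independent)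
      (auto simp: P_def lattice_basis_def)
  ultimately show ?thesis unfolding c_def P_def by blast
qed

end
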